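(* Let $u\colon A\to\mathbb{R}$ be a locally Lipschitz function on an open set $A\subset\mathbb{R}^n$, and let $\psi\in C^2(I)$ satisfy $\psi'(t)>0$ for every $t\in I$, where $I\subset\mathbb{R}$ is an open interval containing $u(A)$. If the composite function $v=\psi\circ u$ is concave on every convex subset of $A$, then $u$ is locally semiconcave in $A$.
   Context: A function $u$ is locally semiconcave in $A$ if for every compact $K\subset A$ there is a constant $C=C(K)\ge 0$ such that $u(\lambda x+(1-\lambda)y)\ge \lambda u(x)+(1-\lambda)u(y)-C\frac{\lambda(1-\lambda)}{2}|x-y|^2$ for all segments $[x,y]\subset K$ and all $\lambda\in[0,1]$ (equivalently, $D^2u\le C\,I$ in the sense of distributions locally). *)

theory Defs
  imports "HOL-Analysis.Analysis"
begin

definition locally_lipschitz_on :: "'a::euclidean_space set \<Rightarrow> ('a \<Rightarrow> real) \<Rightarrow> bool" where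
  "locally_lipschitz_on A u \<longleftrightarrow>
     (\<forall>x\<in>A. \<exists>e>0. \<exists>L. L-lipschitz_on (ball x e \<inter> A) u)"

definition locally_semiconcave :: "'a::euclidean_space set \<Rightarrow> ('a \<Rightarrow> real) \<Rightarrow> bool" where
  "locally_semiconcave A u \<longleftrightarrow>
     (\<forall>K. compact K \<and> K \<subseteq> A \<longrightarrow>
        (\<exists>C\<ge>0. \<forall>x y. closed_segment x y \<subseteq> K \<longrightarrow>
           (\<forall>l\<in>{0..1::real}.
              u (l *\<^sub>R x + (1 - l) *\<^sub>R y) \<ge>
                l * u x + (1 - l) * u y - C * (l * (1 - l) / 2) * (norm (x - y))\<^sup>2)))"

end

theory Submission
  imports Defs
begin

text \<open>On a compact set K the values of u lie in an interval \<open>[p, q] \<subseteq> I\<close>, on which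
  \<open>\<psi>' \<ge> \<mu> > 0\<close>, \<open>\<bar>\<psi>''\<bar> \<le> B\<close>, and u is L-Lipschitz on K. For a segment with endpoint values
  a, b and value c at the point \<open>l x + (1 - l) y\<close>, concavity of \<open>\<psi> \<circ> u\<close> and Taylor's formula
  at \<open>m = l a + (1 - l) b\<close> give \<open>\<psi> c \<ge> \<psi> m - B l (1 - l) (a - b)\<^sup>2 / 2\<close>; since \<psi> grows with
  slope at least \<mu>, \<open>c \<ge> m - B l (1 - l) (a - b)\<^sup>2 / (2 \<mu>)\<close>, and \<open>\<bar>a - b\<bar> \<le> L \<bar>x - y\<bar>\<close>
  yields semiconcavity with constant \<open>B L\<^sup>2 / \<mu>\<close>.\<close>

lemma locally_lipschitz_on_compact_imp_lipschitz_on: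
  fixes A K :: "'a::euclidean_space set" and u :: "'a \<Rightarrow> real"
  assumes "locally_lipschitz_on A u" "compact K" "K \<subseteq> A"
  obtains L where "L-lipschitz_on K u"
proof -
  have ll: "local_lipschitz {0::real} K (\<lambda>_. u)"
  proof (rule local_lipschitzI)
    fix t :: real and x assume "t \<in> {0}" "x \<in> K"
    then have "x \<in> A" using assms by auto
    then obtain e L where e: "e > 0" "L-lipschitz_on (ball x e \<inter> A) u"
      using assms(1) unfolding locally_lipschitz_on_def by blast
    have "cball x (e/2) \<inter> K \<subseteq> ball x e \<inter> A" using e(1) assms(3) by auto
    then have "L-lipschitz_on (cball x (e/2) \<inter> K) u" using e(2) lipschitz_on_subset by blast
    then show "\<exists>r>0. \<exists>L. \<forall>t\<in>cball t r \<inter> {0}. L-lipschitz_on (cball x r \<inter> K) u"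
      using e(1) by (intro exI[of _ "e/2"]) auto
  qed
  obtain L where "\<And>t. t \<in> {0::real} \<Longrightarrow> L-lipschitz_on K u"
    using local_lipschitz_compact_implies_lipschitz[OF ll assms(2) compact_sing] by auto
  then show ?thesis using that by blast
qed

lemma compact_in_interval_obtain_Icc:
  fixes S :: "real set"
  assumes "compact S" "S \<subseteq> I" "is_interval I"
  obtains p q where "S \<subseteq> {p..q}" "{p..q} \<subseteq> I"
proof (cases "S = {}")
  case True
  then show ?thesis using that[of 1 0] by simp
next
  case False
  obtain p where p: "p \<in> S" "\<forall>s\<in>S. p \<le> s" using compact_attains_inf[OF assms(1) False] by blast
  obtain q where q: "q \<in> S" "\<forall>s\<in>S. s \<le> q" using compact_attains_sup[OF assms(1) False] by blast
  have "{p..q} \<subseteq> I"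
  proof
    fix t assume "t \<in> {p..q}"
    then show "t \<in> I" using mem_is_interval_1_I[OF assms(3), of p q t] p(1) q(1) assms(2) by auto
  qed
  then show ?thesis using that[of p q] p q by (simp add: subset_iff)
qed

lemma second_order_taylor_lower_bound:
  fixes \<psi> \<psi>' \<psi>'' :: "real \<Rightarrow> real"
  assumes "\<forall>t\<in>{p..q}. (\<psi> has_real_derivative \<psi>' t) (at t)"
    and "\<forall>t\<in>{p..q}. (\<psi>' has_real_derivative \<psi>'' t) (at t)"
    and "\<forall>t\<in>{p..q}. \<bar>\<psi>'' t\<bar> \<le> B"
    and "a \<in> {p..q}" "m \<in> {p..q}"
  shows "\<psi> m + \<psi>' m * (a - m) - B / 2 * (a - m)\<^sup>2 \<le> \<psi> a"
proof (cases "a = m")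
  case False
  define diff where "diff = (\<lambda>n::nat. if n = 0 then \<psi> else if n = 1 then \<psi>' else \<psi>'')"
  have "\<forall>k t. k < 2 \<and> p \<le> t \<and> t \<le> q \<longrightarrow> DERIV (diff k) t :> diff (Suc k) t"
    using assms(1,2) by (auto simp: diff_def less_2_cases_iff)
  then obtain t where t: "if a < m then a < t \<and> t < m else m < t \<and> t < a"
    "\<psi> a = (\<Sum>k<2. diff k m / fact k * (a - m) ^ k) + diff 2 t / fact 2 * (a - m)\<^sup>2"
    using Taylor[of 2 diff \<psi> p q m a] assms(4,5) False by (auto simp: diff_def)
  then have "t \<in> {p..q}" using assms(4,5) by (auto split: if_splits)
  then have "\<bar>\<psi>'' t\<bar> \<le> B" using assms(3) by blast
  then have "- B \<le> \<psi>'' t" by linarith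
  then have "- B / 2 * (a - m)\<^sup>2 \<le> \<psi>'' t / 2 * (a - m)\<^sup>2"
    by (intro mult_right_mono) auto
  moreover have "\<psi> a = \<psi> m + \<psi>' m * (a - m) + \<psi>'' t / 2 * (a - m)\<^sup>2"
    using t(2) by (simp add: diff_def numeral_2_eq_2 lessThan_Suc)
  ultimately show ?thesis by linarith
qed simp

lemma convex_combination_second_order_lower_bound:
  fixes \<psi> \<psi>' \<psi>'' :: "real \<Rightarrow> real"
  assumes "\<forall>t\<in>{p..q}. (\<psi> has_real_derivative \<psi>' t) (at t)"
    and "\<forall>t\<in>{p..q}. (\<psi>' has_real_derivative \<psi>'' t) (at t)"
    and "\<forall>t\<in>{p..q}. \<bar>\<psi>'' t\<bar> \<le> B"
    and "a \<in> {p..q}" "b \<in> {p..q}" "0 \<le> l" "l \<le> 1"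
  shows "\<psi> (l * a + (1 - l) * b) - B / 2 * (l * (1 - l) * (a - b)\<^sup>2) \<le> l * \<psi> a + (1 - l) * \<psi> b"
proof -
  define m where "m = l * a + (1 - l) * b"
  have "m \<in> {p..q}"
    unfolding m_def using convexD[of "{p..q}" a b l "1 - l"] assms(4-7) by simp
  then have "l * (\<psi> m + \<psi>' m * (a - m) - B / 2 * (a - m)\<^sup>2)
      + (1 - l) * (\<psi> m + \<psi>' m * (b - m) - B / 2 * (b - m)\<^sup>2) \<le> l * \<psi> a + (1 - l) * \<psi> b"
    using second_order_taylor_lower_bound[OF assms(1-3)] assms(4-7)
    by (intro add_mono mult_left_mono) auto
  moreover have "l * (\<psi> m + \<psi>' m * (a - m) - B / 2 * (a - m)\<^sup>2)
      + (1 - l) * (\<psi> m + \<psi>' m * (b - m) - B / 2 * (b - m)\<^sup>2)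
      = \<psi> m - B / 2 * (l * (1 - l) * (a - b)\<^sup>2)"
  proof -
    have eqs: "a - m = (1 - l) * (a - b)" "b - m = - (l * (a - b))"
      unfolding m_def by algebra+
    show ?thesis unfolding eqs by (simp add: power2_eq_square field_simps)
  qed
  ultimately show ?thesis unfolding m_def by linarith
qed

lemma slope_lower_bound_imp_diff_ge:
  fixes \<psi> \<psi>' :: "real \<Rightarrow> real"
  assumes "c \<le> m"
    and "\<forall>t\<in>{c..m}. (\<psi> has_real_derivative \<psi>' t) (at t)"
    and "\<forall>t\<in>{c..m}. \<mu> \<le> \<psi>' t"
  shows "\<mu> * (m - c) \<le> \<psi> m - \<psi> c"
proof (cases "c = m")
  case False
  then obtain w where "c < w" "w < m" "\<psi> m - \<psi> c = (m - c) * \<psi>' w"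
    using MVT2[of c m \<psi> \<psi>'] assms by force
  then show ?thesis using assms(3) by (simp add: mult.commute mult_left_mono)
qed simp

lemma comp_concavity_inequality_imp_semiconcavity_inequality:
  fixes \<psi> \<psi>' \<psi>'' :: "real \<Rightarrow> real"
  assumes "\<forall>t\<in>{p..q}. (\<psi> has_real_derivative \<psi>' t) (at t)"
    and "\<forall>t\<in>{p..q}. (\<psi>' has_real_derivative \<psi>'' t) (at t)"
    and "\<forall>t\<in>{p..q}. \<bar>\<psi>'' t\<bar> \<le> B"
    and "\<mu> > 0" "\<forall>t\<in>{p..q}. \<mu> \<le> \<psi>' t"
    and "a \<in> {p..q}" "b \<in> {p..q}" "c \<in> {p..q}" "0 \<le> l" "l \<le> 1"
    and "l * \<psi> a + (1 - l) * \<psi> b \<le> \<psi> c"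
  shows "l * a + (1 - l) * b - B / (2 * \<mu>) * (l * (1 - l) * (a - b)\<^sup>2) \<le> c"
proof -
  define m where "m = l * a + (1 - l) * b"
  define D where "D = B / 2 * (l * (1 - l) * (a - b)\<^sup>2)"
  have "B / (2 * \<mu>) * (l * (1 - l) * (a - b)\<^sup>2) = D / \<mu>" unfolding D_def by simp
  moreover have "m - D / \<mu> \<le> c"
  proof (cases "m \<le> c")
    case True
    have "0 \<le> B" using assms(3,6) by (meson abs_ge_zero order_trans)
    then have "0 \<le> D" unfolding D_def using assms(9,10) by simp
    then have "0 \<le> D / \<mu>" using assms(4) by simp
    then show ?thesis using True by linarith
  next
    case False
    have "m \<in> {p..q}"
      unfolding m_def using convexD[of "{p..q}" a b l "1 - l"] assms(6,7,9,10) by simp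
    then have "\<mu> * (m - c) \<le> \<psi> m - \<psi> c"
      using False assms(1,5,8) by (intro slope_lower_bound_imp_diff_ge) auto
    also have "\<dots> \<le> D"
      using convex_combination_second_order_lower_bound[OF assms(1-3,6,7,9,10)] assms(11)
      unfolding m_def D_def by linarith
    finally show ?thesis using assms(4) by (simp add: field_simps)
  qed
  ultimately show ?thesis unfolding m_def by linarith
qed

lemma derivative_bounds_on_Icc:
  fixes \<psi>' \<psi>'' :: "real \<Rightarrow> real"
  assumes "{p..q} \<subseteq> I"
    and "\<forall>t\<in>I. (\<psi>' has_real_derivative \<psi>'' t) (at t)"
    and "continuous_on I \<psi>''"
    and "\<forall>t\<in>I. \<psi>' t > 0"
  obtains \<mu> B where "\<mu> > 0" "\<forall>t\<in>{p..q}. \<mu> \<le> \<psi>' t" "B \<ge> 0" "\<forall>t\<in>{p..q}. \<bar>\<psi>'' t\<bar> \<le> B"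
proof (cases "{p..q} = {}")
  case False
  have "continuous_on {p..q} \<psi>'"
    using assms(1,2) by (intro continuous_at_imp_continuous_on ballI DERIV_isCont) blast
  then obtain t0 where "t0 \<in> {p..q}" "\<forall>t\<in>{p..q}. \<psi>' t0 \<le> \<psi>' t"
    using continuous_attains_inf[OF compact_Icc False] by blast
  moreover have "continuous_on {p..q} (\<lambda>t. \<bar>\<psi>'' t\<bar>)"
    using continuous_on_subset[OF assms(3,1)] by (intro continuous_intros)
  then obtain t1 where "\<forall>t\<in>{p..q}. \<bar>\<psi>'' t\<bar> \<le> \<bar>\<psi>'' t1\<bar>"
    using continuous_attains_sup[OF compact_Icc False] by blast
  ultimately show ?thesis using that[of "\<psi>' t0" "\<bar>\<psi>'' t1\<bar>"] assms(1,4) by auto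
next
  case True
  then show ?thesis using that[of 1 0] by simp
qed

lemma comp_concave_on_segment_imp_semiconcavity_inequality:
  fixes u :: "'a::real_normed_vector \<Rightarrow> real" and \<psi> \<psi>' \<psi>'' :: "real \<Rightarrow> real"
  assumes "L-lipschitz_on K u" "u ` K \<subseteq> {p..q}"
    and "\<forall>t\<in>{p..q}. (\<psi> has_real_derivative \<psi>' t) (at t)"
    and "\<forall>t\<in>{p..q}. (\<psi>' has_real_derivative \<psi>'' t) (at t)"
    and "0 \<le> B" "\<forall>t\<in>{p..q}. \<bar>\<psi>'' t\<bar> \<le> B"
    and "\<mu> > 0" "\<forall>t\<in>{p..q}. \<mu> \<le> \<psi>' t"
    and "closed_segment x y \<subseteq> K" "concave_on (closed_segment x y) (\<psi> \<circ> u)"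
    and "0 \<le> l" "l \<le> 1"
  shows "l * u x + (1 - l) * u y - B * L\<^sup>2 / \<mu> * (l * (1 - l) / 2) * (norm (x - y))\<^sup>2
    \<le> u (l *\<^sub>R x + (1 - l) *\<^sub>R y)"
proof -
  define z where "z = l *\<^sub>R x + (1 - l) *\<^sub>R y"
  have "z \<in> closed_segment x y"
    unfolding z_def closed_segment_def using assms(11,12)
    by (intro CollectI exI[of _ "1 - l"]) (auto simp: algebra_simps)
  then have xyz: "x \<in> K" "y \<in> K" "z \<in> K"
    using assms(9) ends_in_segment by auto
  have "l * \<psi> (u x) + (1 - l) * \<psi> (u y) \<le> \<psi> (u z)"
    using concave_onD[OF assms(10), of "1 - l" x y] assms(11,12) unfolding z_def by simp
  then have "l * u x + (1 - l) * u y - B / (2 * \<mu>) * (l * (1 - l) * (u x - u y)\<^sup>2) \<le> u z"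
    using xyz assms(2-4,6-8,11,12)
    by (intro comp_concavity_inequality_imp_semiconcavity_inequality[where p = p and q = q]) auto
  moreover have "(u x - u y)\<^sup>2 \<le> L\<^sup>2 * (norm (x - y))\<^sup>2"
    using lipschitz_onD[OF assms(1) xyz(1,2)]
    by (metis abs_ge_zero dist_norm dist_real_def power_mono power_mult_distrib power2_abs)
  then have "B / (2 * \<mu>) * (l * (1 - l) * (u x - u y)\<^sup>2)
      \<le> B / (2 * \<mu>) * (l * (1 - l) * (L\<^sup>2 * (norm (x - y))\<^sup>2))"
    using assms(5,7,11,12) by (intro mult_left_mono) auto
  moreover have "B / (2 * \<mu>) * (l * (1 - l) * (L\<^sup>2 * (norm (x - y))\<^sup>2))
      = B * L\<^sup>2 / \<mu> * (l * (1 - l) / 2) * (norm (x - y))\<^sup>2"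
    by (simp add: field_simps)
  ultimately show ?thesis unfolding z_def by linarith
qed

theorem proposition2p1:
  fixes A :: "'a::euclidean_space set" and u :: "'a \<Rightarrow> real"
    and I :: "real set" and \<psi> \<psi>' \<psi>'' :: "real \<Rightarrow> real"
  assumes "open A"
    and "locally_lipschitz_on A u"
    and "open I" and "is_interval I" and "u ` A \<subseteq> I"
    and "\<forall>t\<in>I. (\<psi> has_real_derivative \<psi>' t) (at t)"
    and "\<forall>t\<in>I. (\<psi>' has_real_derivative \<psi>'' t) (at t)"
    and "continuous_on I \<psi>''"
    and "\<forall>t\<in>I. \<psi>' t > 0"
    and "\<forall>S. convex S \<and> S \<subseteq> A \<longrightarrow> concave_on S (\<psi> \<circ> u)"
  shows "locally_semiconcave A u"
  unfolding locally_semiconcave_def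
proof (intro allI impI)
  fix K assume K: "compact K \<and> K \<subseteq> A"
  obtain L where L: "L-lipschitz_on K u"
    using locally_lipschitz_on_compact_imp_lipschitz_on assms(2) K by blast
  have "compact (u ` K)"
    using K L by (intro compact_continuous_image lipschitz_on_continuous_on) auto
  then obtain p q where pq: "u ` K \<subseteq> {p..q}" "{p..q} \<subseteq> I"
    using compact_in_interval_obtain_Icc assms(4,5) K by blast
  obtain \<mu> B where \<mu>B: "\<mu> > 0" "\<forall>t\<in>{p..q}. \<mu> \<le> \<psi>' t" "B \<ge> 0" "\<forall>t\<in>{p..q}. \<bar>\<psi>'' t\<bar> \<le> B"
    using derivative_bounds_on_Icc[OF pq(2) assms(7-9)] by blast
  show "\<exists>C\<ge>0. \<forall>x y. closed_segment x y \<subseteq> K \<longrightarrow>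
           (\<forall>l\<in>{0..1}. l * u x + (1 - l) * u y - C * (l * (1 - l) / 2) * (norm (x - y))\<^sup>2
              \<le> u (l *\<^sub>R x + (1 - l) *\<^sub>R y))"
  proof (intro exI[of _ "B * L\<^sup>2 / \<mu>"] conjI allI impI ballI)
    show "0 \<le> B * L\<^sup>2 / \<mu>" using \<mu>B(1,3) by simp
    fix x y and l :: real assume "closed_segment x y \<subseteq> K" "l \<in> {0..1}"
    moreover have "concave_on (closed_segment x y) (\<psi> \<circ> u)"
      using assms(10) \<open>closed_segment x y \<subseteq> K\<close> K by auto
    ultimately show "l * u x + (1 - l) * u y - B * L\<^sup>2 / \<mu> * (l * (1 - l) / 2) * (norm (x - y))\<^sup>2
        \<le> u (l *\<^sub>R x + (1 - l) *\<^sub>R y)"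
      using L pq assms(6,7) \<mu>B
      by (intro comp_concave_on_segment_imp_semiconcavity_inequality) auto
  qed
qed

end
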